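(* Let $\gamma$ denote the Euler–Mascheroni constant. Define $a_1=\frac12$, $a_2=\frac16$, $a_3=-\frac16$, $a_4=\frac35$, $a_5=-\frac35$, $a_6=\frac{79}{126}$, $a_7=-\frac{79}{126}$, $a_8=\frac{7230}{6241}$, $a_9=-\frac{7230}{6241}$, $a_{10}=\frac{4146631}{3833346}$, $a_{11}=-\frac{4146631}{3833346}$. For a positive integer $n$ and $k\in\{10,11\}$ define the finite continued fraction $$R_k(n)=\cfrac{a_1}{n+\cfrac{a_2 n}{n+\cfrac{a_3 n}{n+\cfrac{\ddots}{n+\cfrac{a_{k-1}n}{n+a_k}}}}},$$ i.e. $R_k(n)=a_1/T_2$ where $T_k=n+a_k$ and $T_j=n+\frac{a_j n}{T_{j+1}}$ for $2\le j\le k-1$, and let $r_k(n)=\sum_{m=1}^{n}\frac1m-\ln n-R_k(n)$. Put $C_{10}=-\frac{2755095121}{892586949408}$ and $C_{11}=\frac{20169451}{3821257440}$. Then for every positive integer $n$, $$-C_{10}\,\frac{1}{(n+1)^{11}}<\gamma-r_{10}(n)<-C_{10}\,\frac{1}{n^{11}},$$ $$C_{11}\,\frac{1}{(n+1)^{12}}<r_{11}(n)-\gamma<C_{11}\,\frac{1}{n^{12}}.$$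
   Context: $\gamma=\lim_{n\to\infty}\left(\sum_{m=1}^{n}\frac1m-\ln n\right)$ is the Euler–Mascheroni constant. The constants $C_{10},C_{11}$ are the limits $\lim_{n\to\infty}n^{k+1}(r_k(n)-\gamma)$ for $k=10,11$. *)

theory Defs
  imports "HOL-Analysis.Analysis"
begin

definition acoef :: "nat \<Rightarrow> real" where
  "acoef i = (if i = 1 then 1/2
    else if i = 2 then 1/6
    else if i = 3 then -1/6
    else if i = 4 then 3/5
    else if i = 5 then -3/5
    else if i = 6 then 79/126
    else if i = 7 then -79/126
    else if i = 8 then 7230/6241
    else if i = 9 then -7230/6241
    else if i = 10 then 4146631/3833346
    else if i = 11 then -4146631/3833346
    else 0)"

text \<open>T k n j: the tail T_j of the continued fraction; T_k = n + a_k,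
  T_j = n + a_j n / T_{j+1} for j < k. Defined by recursion on the distance k - j.\<close>
fun Ttail :: "nat \<Rightarrow> real \<Rightarrow> nat \<Rightarrow> real" where
  "Ttail k n 0 = n + acoef k"
| "Ttail k n (Suc d) = n + acoef (k - Suc d) * n / Ttail k n d"

definition T :: "nat \<Rightarrow> real \<Rightarrow> nat \<Rightarrow> real" where
  "T k n j = Ttail k n (k - j)"

definition R :: "nat \<Rightarrow> nat \<Rightarrow> real" where
  "R k n = acoef 1 / T k (real n) 2"

definition r :: "nat \<Rightarrow> nat \<Rightarrow> real" where
  "r k n = (\<Sum>m=1..n. 1 / real m) - ln (real n) - R k n"

definition C10 :: real where "C10 = - 2755095121 / 892586949408"
definition C11 :: real where "C11 = 20169451 / 3821257440"

end

theory Submission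
  imports Defs "HOL-Real_Asymp.Real_Asymp"
begin

(* Both r_k(n) and gamma plus the claimed error term tend to gamma, so one of them lies strictly below
  the other as soon as its decrements from m to m + 1 are smaller for every m >= n. The decrement of
  r_k is ln(1 + 1/m) - 1/(m + 1) + R_k(m + 1) - R_k(m). We bracket the logarithm between partial sums
  of its artanh series and write R_k(m) as a rational function of m, a quotient of two continuants of
  the continued fraction. Each of the four inequalities then reduces to the positivity of a polynomial
  on [1, oo), which holds because its coefficients in powers of x - 1 are all positive. *)

lemma less_if_decrements_less:
  fixes e f :: "nat \<Rightarrow> real"
  assumes "e \<longlonglongrightarrow> L" "f \<longlonglongrightarrow> L"
    and "\<And>m. n \<le> m \<Longrightarrow> f m - f (Suc m) < e m - e (Suc m)"
  shows "f n < e n"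
proof -
  define g where "g j = e (j + n) - f (j + n)" for j
  have "decseq g"
  proof (rule decseq_SucI)
    show "g (Suc j) \<le> g j" for j
      using assms(3)[of "j + n"] by (simp add: g_def)
  qed
  moreover have "g \<longlonglongrightarrow> 0"
    unfolding g_def using LIMSEQ_ignore_initial_segment[OF tendsto_diff[OF assms(1,2)], of n] by simp
  ultimately have "0 \<le> g 1"
    by (rule decseq_ge)
  then show ?thesis
    using assms(3)[of n] by (simp add: g_def)
qed

subsection \<open>Partial sums of the series of ln(1 + 1/x)\<close>

definition ln_partial_sum :: "nat \<Rightarrow> real \<Rightarrow> real" where
  "ln_partial_sum N x = (\<Sum>i<N. 2 / (real (2 * i + 1) * (2 * x + 1) ^ (2 * i + 1)))"

lemma sums_ln_one_plus_inverse:
  fixes x :: real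
  assumes "0 < x"
  shows "(\<lambda>i. 2 / (real (2 * i + 1) * (2 * x + 1) ^ (2 * i + 1))) sums ln (1 + 1 / x)"
proof -
  have "0 < 1 + 1 / x"
    using assms by (simp add: add_pos_pos)
  moreover have "((1 + 1 / x) - 1) / ((1 + 1 / x) + 1) = 1 / (2 * x + 1)"
    using assms by (simp add: field_simps)
  ultimately have "(\<lambda>i. 2 * (1 / (2 * x + 1)) ^ (2 * i + 1) / real (2 * i + 1)) sums ln (1 + 1 / x)"
    using ln_series_quadratic[of "1 + 1 / x"] by simp
  moreover have "(\<lambda>i. 2 * (1 / (2 * x + 1)) ^ (2 * i + 1) / real (2 * i + 1))
      = (\<lambda>i. 2 / (real (2 * i + 1) * (2 * x + 1) ^ (2 * i + 1)))"
    by (simp add: power_one_over mult_ac)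
  ultimately show ?thesis
    by simp
qed

lemma ln_partial_sum_le:
  fixes x :: real
  assumes "0 < x"
  shows "ln_partial_sum N x \<le> ln (1 + 1 / x)"
proof -
  define f where "f i = 2 / (real (2 * i + 1) * (2 * x + 1) ^ (2 * i + 1))" for i
  have f: "f sums ln (1 + 1 / x)"
    unfolding f_def by (rule sums_ln_one_plus_inverse[OF assms])
  have "ln_partial_sum N x = sum f {..<N}"
    by (simp add: ln_partial_sum_def f_def)
  also have "\<dots> \<le> suminf f"
    using f assms by (intro sum_le_suminf) (auto simp: sums_iff f_def)
  also have "\<dots> = ln (1 + 1 / x)"
    using f by (simp add: sums_iff)
  finally show ?thesis .
qed

lemma ln_le_ln_partial_sum:
  fixes x :: real
  assumes "0 < x" "0 < N"
  shows "ln (1 + 1 / x)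
    \<le> ln_partial_sum N x + 1 / (2 * (2 * N + 1) * x * (x + 1) * (2 * x + 1) ^ (2 * N - 1))"
proof -
  define y where "y = 1 / (2 * x + 1)"
  define f where "f i = 2 * y ^ (2 * i + 1) / real (2 * i + 1)" for i
  have y: "0 < y" "y < 1"
    using assms by (simp_all add: y_def)
  have "f = (\<lambda>i. 2 / (real (2 * i + 1) * (2 * x + 1) ^ (2 * i + 1)))"
    by (simp add: fun_eq_iff f_def y_def power_one_over)
  then have f: "f sums ln (1 + 1 / x)" and partial: "ln_partial_sum N x = (\<Sum>i<N. f i)"
    using sums_ln_one_plus_inverse[OF assms(1)] by (simp_all add: ln_partial_sum_def)
  have tail: "(\<lambda>i. f (i + N)) sums (ln (1 + 1 / x) - ln_partial_sum N x)"
    unfolding partial by (rule sums_split_initial_segment[OF f])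
  have geometric: "(\<lambda>i. f N * (y\<^sup>2) ^ i) sums (f N * (1 / (1 - y\<^sup>2)))"
    using y by (intro sums_mult geometric_sums) (simp add: abs_square_less_1)
  have "f (i + N) \<le> f N * (y\<^sup>2) ^ i" for i
  proof -
    have "2 * (i + N) + 1 = (2 * N + 1) + 2 * i"
      by simp
    then have "y ^ (2 * (i + N) + 1) = y ^ (2 * N + 1) * (y\<^sup>2) ^ i"
      by (simp only: power_add power_mult)
    then have "f (i + N) = 2 * (y ^ (2 * N + 1) * (y\<^sup>2) ^ i) / real (2 * (i + N) + 1)"
      by (simp only: f_def)
    also have "\<dots> \<le> 2 * (y ^ (2 * N + 1) * (y\<^sup>2) ^ i) / real (2 * N + 1)"
      using y by (intro divide_left_mono) auto
    also have "\<dots> = f N * (y\<^sup>2) ^ i"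
      by (simp add: f_def)
    finally show ?thesis .
  qed
  then have "ln (1 + 1 / x) - ln_partial_sum N x \<le> f N * (1 / (1 - y\<^sup>2))"
    using tail geometric by (rule sums_le)
  also have "f N * (1 / (1 - y\<^sup>2)) = 1 / (2 * (2 * N + 1) * x * (x + 1) * (2 * x + 1) ^ (2 * N - 1))"
  proof -
    define z where "z = y ^ (2 * N - 1)"
    define c where "c = real (2 * N + 1)"
    define d where "d = x * (x + 1)"
    have yz: "y ^ (2 * N + 1) = y\<^sup>2 * z"
      using assms(2) unfolding z_def power_add[symmetric] by (simp add: Suc_diff_Suc)
    have y2: "1 - y\<^sup>2 = 4 * d * y\<^sup>2"
    proof -
      have "y * (2 * x + 1) = 1"
        using assms(1) by (simp add: y_def)
      then show ?thesis
        unfolding d_def by algebra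
    qed
    have nonzero: "y \<noteq> 0" "c \<noteq> 0" "d \<noteq> 0"
      using assms y by (auto simp: c_def d_def)
    have "f N * (1 / (1 - y\<^sup>2)) = 2 * (y\<^sup>2 * z) / c * (1 / (4 * d * y\<^sup>2))"
      by (simp only: f_def yz y2 c_def)
    also have "\<dots> = z / (2 * c * d)"
      using nonzero by (simp add: field_simps)
    also have "\<dots> = 1 / (2 * (2 * N + 1) * x * (x + 1) * (2 * x + 1) ^ (2 * N - 1))"
      by (simp add: z_def y_def c_def d_def power_one_over mult.assoc)
    finally show ?thesis .
  qed
  finally show ?thesis
    by (simp add: algebra_simps)
qed

lemma ln_partial_sum_7:
  fixes x :: real
  assumes "0 < x"
  shows "ln_partial_sum 7 x = (2 * (2 * x + 1) ^ 12 + 2/3 * (2 * x + 1) ^ 10 + 2/5 * (2 * x + 1) ^ 8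
    + 2/7 * (2 * x + 1) ^ 6 + 2/9 * (2 * x + 1) ^ 4 + 2/11 * (2 * x + 1) ^ 2 + 2/13) / (2 * x + 1) ^ 13"
proof -
  define u where "u = 2 * x + 1"
  have u: "0 < u"
    using assms by (simp add: u_def)
  have "ln_partial_sum 7 x = (\<Sum>i<7. 2 / (real (2 * i + 1) * u ^ (2 * i + 1)))"
    by (simp add: ln_partial_sum_def u_def)
  also have "\<dots> = (2 * u ^ 12 + 2/3 * u ^ 10 + 2/5 * u ^ 8 + 2/7 * u ^ 6 + 2/9 * u ^ 4 + 2/11 * u ^ 2 + 2/13)
      / u ^ 13"
    using u by (simp add: eval_nat_numeral field_simps)
  finally show ?thesis
    by (simp add: u_def)
qed

lemma ln_le_ln_partial_sum_7:
  fixes x :: real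
  assumes "0 < x"
  shows "ln (1 + 1 / x) \<le> ln_partial_sum 7 x + 1 / (30 * x * (x + 1) * (2 * x + 1) ^ 13)"
  using ln_le_ln_partial_sum[OF assms, of 7] by simp

subsection \<open>The continued fraction\<close>

fun cf_continuant :: "nat \<Rightarrow> real \<Rightarrow> nat \<Rightarrow> real" where
  "cf_continuant k x 0 = 1"
| "cf_continuant k x (Suc 0) = x + acoef k"
| "cf_continuant k x (Suc (Suc d)) =
     x * cf_continuant k x (Suc d) + acoef (k - Suc d) * x * cf_continuant k x d"

lemma Ttail_eq_continuant_ratio:
  assumes "\<And>i. i < d \<Longrightarrow> Ttail k x i \<noteq> 0"
  shows "cf_continuant k x d \<noteq> 0 \<and> Ttail k x d = cf_continuant k x (Suc d) / cf_continuant k x d"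
  using assms
proof (induction d)
  case 0
  then show ?case
    by simp
next
  case (Suc d)
  let ?K = "cf_continuant k x"
  from Suc have K: "?K d \<noteq> 0" and T: "Ttail k x d = ?K (Suc d) / ?K d"
    by auto
  have K': "?K (Suc d) \<noteq> 0"
    using Suc.prems[of d] T by auto
  then have "Ttail k x (Suc d) = ?K (Suc (Suc d)) / ?K (Suc d)"
    using K by (simp add: T field_simps)
  with K' show ?case
    by blast
qed

lemma R_eq_continuant_ratio:
  assumes "2 \<le> k" "\<And>i. i < k - 2 \<Longrightarrow> Ttail k (real n) i \<noteq> 0"
  shows "R k n = cf_continuant k (real n) (k - 2) / (2 * cf_continuant k (real n) (k - 1))"
proof -
  have "Suc (k - 2) = k - 1"
    using assms(1) by simp
  then show ?thesis
    using Ttail_eq_continuant_ratio[OF assms(2)] by (simp add: R_def T_def acoef_def)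
qed

lemma Ttail_ge_if_acoef_nonneg:
  assumes "j = Suc i" "0 \<le> x" "0 \<le> acoef (k - j)" "0 < Ttail k x i"
  shows "x \<le> Ttail k x j"
  using assms by simp

lemma Ttail_pos:
  assumes "j = Suc i" "0 < x" "0 < Ttail k x i" "- acoef (k - j) < Ttail k x i"
  shows "0 < Ttail k x j"
proof -
  have "Ttail k x j = x * (Ttail k x i + acoef (k - j)) / Ttail k x i"
    using assms(1,3) by (simp add: field_simps)
  then show ?thesis
    using assms by simp
qed

lemma eventually_Ttail_ge_half: "\<forall>\<^sub>F x in at_top. x / 2 \<le> Ttail k x d"
proof (induction d)
  case 0
  have "\<forall>\<^sub>F x in at_top. 2 * \<bar>acoef k\<bar> \<le> x"
    by (rule eventually_ge_at_top)
  then show ?case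
    by eventually_elim (simp add: abs_le_iff)
next
  case (Suc d)
  let ?a = "acoef (k - Suc d)"
  have "\<forall>\<^sub>F x in at_top. 4 * \<bar>?a\<bar> + 1 \<le> x"
    by (rule eventually_ge_at_top)
  with Suc.IH show ?case
  proof eventually_elim
    case (elim x)
    let ?T = "Ttail k x d"
    have x: "0 < x" and T: "0 < ?T"
      using elim by auto
    have "x / ?T \<le> 2"
      using elim T by (simp add: divide_le_eq)
    then have "\<bar>?a\<bar> * (x / ?T) \<le> \<bar>?a\<bar> * 2"
      by (rule mult_left_mono) simp
    moreover have "\<bar>?a * x / ?T\<bar> = \<bar>?a\<bar> * (x / ?T)"
      using x T by (simp add: abs_mult)
    ultimately have "- (2 * \<bar>?a\<bar>) \<le> ?a * x / ?T"
      by linarith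
    moreover have "Ttail k x (Suc d) = x + ?a * x / ?T"
      by simp
    ultimately show "x / 2 \<le> Ttail k x (Suc d)"
      using elim by linarith
  qed
qed

lemma R_tendsto_zero: "(\<lambda>n. R k n) \<longlonglongrightarrow> 0"
proof -
  have "filterlim (\<lambda>x. T k x 2) at_top at_top"
    unfolding T_def
    by (rule filterlim_at_top_mono[OF _ eventually_Ttail_ge_half]) real_asymp
  then have "filterlim (\<lambda>n. T k (real n) 2) at_top sequentially"
    by (rule filterlim_compose[OF _ filterlim_real_sequentially])
  then show ?thesis
    unfolding R_def by (intro tendsto_divide_0[OF tendsto_const] filterlim_at_top_imp_at_infinity)
qed

lemma r_tendsto_euler_mascheroni: "(\<lambda>n. r k n) \<longlonglongrightarrow> euler_mascheroni"
proof -
  have "(\<lambda>n. harm n - ln (real n) - R k n) \<longlonglongrightarrow> euler_mascheroni - 0"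
    by (intro tendsto_diff euler_mascheroni_LIMSEQ R_tendsto_zero)
  then show ?thesis
    by (simp add: r_def harm_def inverse_eq_divide)
qed

lemma r_decrement:
  assumes "0 < n"
  shows "r k n - r k (Suc n) = ln (1 + 1 / real n) - 1 / (real n + 1) + R k (Suc n) - R k n"
proof -
  have "1 + 1 / real n = (real n + 1) / real n"
    using assms by (simp add: field_simps)
  then have "ln (1 + 1 / real n) = ln (real n + 1) - ln (real n)"
    using assms by (simp add: ln_div)
  then show ?thesis
    by (simp add: r_def add_ac)
qed

subsection \<open>R_10 and R_11 as rational functions\<close>

(* The coefficients alternate in sign: a step with a nonnegative coefficient gives a tail of at least x,
  which keeps the tail of the following step, with a negative coefficient, positive. *)
lemma Ttail_10_pos:
  assumes "1 \<le> x" "i < 8"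
  shows "0 < Ttail 10 x i"
proof -
  have x: "0 < x"
    using assms by simp
  have T0: "7230/6241 < Ttail 10 x 0"
    using assms by (simp add: acoef_def)
  have T1: "0 < Ttail 10 x 1"
    using Ttail_pos[of 1 0 x 10] x T0 by (simp add: acoef_def del: Ttail.simps)
  have T2: "x \<le> Ttail 10 x 2"
    using Ttail_ge_if_acoef_nonneg[of 2 1 x 10] x T1 by (simp add: acoef_def del: Ttail.simps)
  have T3: "0 < Ttail 10 x 3"
    using Ttail_pos[of 3 2 x 10] x T2 assms by (simp add: acoef_def del: Ttail.simps)
  have T4: "x \<le> Ttail 10 x 4"
    using Ttail_ge_if_acoef_nonneg[of 4 3 x 10] x T3 by (simp add: acoef_def del: Ttail.simps)
  have T5: "0 < Ttail 10 x 5"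
    using Ttail_pos[of 5 4 x 10] x T4 assms by (simp add: acoef_def del: Ttail.simps)
  have T6: "x \<le> Ttail 10 x 6"
    using Ttail_ge_if_acoef_nonneg[of 6 5 x 10] x T5 by (simp add: acoef_def del: Ttail.simps)
  have T7: "0 < Ttail 10 x 7"
    using Ttail_pos[of 7 6 x 10] x T6 assms by (simp add: acoef_def del: Ttail.simps)
  show ?thesis
    using assms(2) T0 T1 T2 T3 T4 T5 T6 T7 x
    by (auto simp: less_Suc_eq numeral_eq_Suc simp del: Ttail.simps)
qed

lemma Ttail_11_pos:
  assumes "2 \<le> x" "i < 9"
  shows "0 < Ttail 11 x i"
proof -
  have x: "0 < x"
    using assms by simp
  have T0: "0 < Ttail 11 x 0"
    using assms by (simp add: acoef_def)
  have T1: "x \<le> Ttail 11 x 1"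
    using Ttail_ge_if_acoef_nonneg[of 1 0 x 11] x T0 by (simp add: acoef_def del: Ttail.simps)
  have T2: "0 < Ttail 11 x 2"
    using Ttail_pos[of 2 1 x 11] x T1 assms by (simp add: acoef_def del: Ttail.simps)
  have T3: "x \<le> Ttail 11 x 3"
    using Ttail_ge_if_acoef_nonneg[of 3 2 x 11] x T2 by (simp add: acoef_def del: Ttail.simps)
  have T4: "0 < Ttail 11 x 4"
    using Ttail_pos[of 4 3 x 11] x T3 assms by (simp add: acoef_def del: Ttail.simps)
  have T5: "x \<le> Ttail 11 x 5"
    using Ttail_ge_if_acoef_nonneg[of 5 4 x 11] x T4 by (simp add: acoef_def del: Ttail.simps)
  have T6: "0 < Ttail 11 x 6"
    using Ttail_pos[of 6 5 x 11] x T5 assms by (simp add: acoef_def del: Ttail.simps)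
  have T7: "x \<le> Ttail 11 x 7"
    using Ttail_ge_if_acoef_nonneg[of 7 6 x 11] x T6 by (simp add: acoef_def del: Ttail.simps)
  have T8: "0 < Ttail 11 x 8"
    using Ttail_pos[of 8 7 x 11] x T7 assms by (simp add: acoef_def del: Ttail.simps)
  show ?thesis
    using assms(2) T0 T1 T2 T3 T4 T5 T6 T7 T8 x
    by (auto simp: less_Suc_eq numeral_eq_Suc simp del: Ttail.simps)
qed

(* At x = 1 the innermost tail 1 + a_11 is negative, so this case is computed directly. *)
lemma Ttail_11_at_1_nonzero:
  assumes "i < 9"
  shows "Ttail 11 1 i \<noteq> 0"
  using assms by (auto simp: less_Suc_eq numeral_eq_Suc acoef_def)

definition R10_num :: "real \<Rightarrow> real" where
  "R10_num x = 757663907 + x * (1462202322 + x * (3663389030 + x * (1473250800 + x * 1610005320)))"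

definition R10_den :: "real \<Rightarrow> real" where
  "R10_den x = 252996980 + x * (2155378680 + x * (4188622200 + x * (7907306400
    + x * (3483170040 + x * 3220010640))))"

definition R11_num :: "real \<Rightarrow> real" where
  "R11_num x = - 262445 + x * (2235870 + x * (- 1311429 + x * (8202600 + x * (- 556710 + x * 3340260))))"

definition R11_den :: "real \<Rightarrow> real" where
  "R11_den x = x\<^sup>2 * (4471740 + x\<^sup>2 * (16405200 + x\<^sup>2 * 6680520))"

lemma R10_den_pos: "0 \<le> x \<Longrightarrow> 0 < R10_den x"
  by (simp add: R10_den_def add_pos_nonneg)

lemma R11_den_pos: "0 < x \<Longrightarrow> 0 < R11_den x"
  by (simp add: R11_den_def add_pos_nonneg)

lemma cf_continuant_10_ratio:
  "cf_continuant 10 x 8 * R10_den x = R10_num x * (2 * cf_continuant 10 x 9)"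
  by (simp add: R10_num_def R10_den_def acoef_def eval_nat_numeral algebra_simps)

lemma cf_continuant_11_ratio:
  "cf_continuant 11 x 9 * R11_den x = R11_num x * (2 * cf_continuant 11 x 10)"
  by (simp add: R11_num_def R11_den_def acoef_def eval_nat_numeral algebra_simps)

lemma R_10_eq:
  assumes "1 \<le> n"
  shows "R 10 n = R10_num n / R10_den n"
proof -
  let ?K = "cf_continuant 10 (real n)"
  have tails: "Ttail 10 (real n) i \<noteq> 0" if "i < 8" for i
    using Ttail_10_pos[of "real n" i] assms that by force
  have "?K 8 \<noteq> 0"
    using Ttail_eq_continuant_ratio[of 8, OF tails] by simp
  moreover have "R10_den n \<noteq> 0"
    using R10_den_pos[of n] by simp
  ultimately have "?K 9 \<noteq> 0"
    using cf_continuant_10_ratio[of n] by auto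
  then show ?thesis
    using R_eq_continuant_ratio[of 10 n] tails cf_continuant_10_ratio[of n] \<open>R10_den n \<noteq> 0\<close>
    by (simp add: frac_eq_eq)
qed

lemma R_11_eq:
  assumes "1 \<le> n"
  shows "R 11 n = R11_num n / R11_den n"
proof -
  let ?K = "cf_continuant 11 (real n)"
  have tails: "Ttail 11 (real n) i \<noteq> 0" if "i < 9" for i
  proof (cases "n = 1")
    case True
    then show ?thesis
      using Ttail_11_at_1_nonzero[OF that] by simp
  next
    case False
    then show ?thesis
      using Ttail_11_pos[of "real n" i] assms that by force
  qed
  have "?K 9 \<noteq> 0"
    using Ttail_eq_continuant_ratio[of 9, OF tails] by simp
  moreover have "R11_den n \<noteq> 0"
    using R11_den_pos[of n] assms by simp
  ultimately have "?K 10 \<noteq> 0"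
    using cf_continuant_11_ratio[of n] by auto
  then show ?thesis
    using R_eq_continuant_ratio[of 11 n] tails cf_continuant_11_ratio[of n] \<open>R11_den n \<noteq> 0\<close>
    by (simp add: frac_eq_eq)
qed

subsection \<open>Positivity certificates for the decrements\<close>

lemma poly_Poly_nonneg:
  fixes t :: "'a :: linordered_idom"
  assumes "list_all (\<lambda>b. 0 \<le> b) as" "0 \<le> t"
  shows "0 \<le> poly (Poly as) t"
  using assms by (induction as) auto

lemma pos_if_shifted_coeffs_pos:
  fixes x y c :: real
  assumes "c * y = poly (Poly (a # as)) (x - 1)" "1 \<le> x" "0 < c" "0 < a" "list_all (\<lambda>b. 0 \<le> b) as"
  shows "0 < y"
proof -
  have "0 \<le> poly (Poly as) (x - 1)"
    using assms(2,5) by (intro poly_Poly_nonneg) simp_all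
  then have "0 < c * y"
    unfolding assms(1) using assms(2,4) by (simp add: add_pos_nonneg)
  with assms(3) show ?thesis
    by (simp add: zero_less_mult_iff)
qed

(* Clearing denominators turns the difference of the two sides into N / D with D > 0; the scaled
  polynomial c * N is given by its coefficients in powers of x - 1. *)
lemma decrement_10_lower:
  fixes x :: real
  assumes "1 \<le> x"
  shows "C10 / x ^ 11 - C10 / (x + 1) ^ 11
    < ln_partial_sum 7 x - 1 / (x + 1) + R10_num (x + 1) / R10_den (x + 1) - R10_num x / R10_den x"
proof -
  define u v where "u = 2 * x + 1" and "v = x + 1"
  define p0 q0 p1 q1 where "p0 = R10_num x" and "q0 = R10_den x" and "p1 = R10_num v" and "q1 = R10_den v"
  have pos: "0 < x" "0 < u" "0 < v" "0 < q0" "0 < q1"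
    using assms by (simp_all add: u_def v_def q0_def q1_def R10_den_pos)
  define N where "N = x ^ 11 * v ^ 11 * q0 * q1
    * (2 * u ^ 12 + 2/3 * u ^ 10 + 2/5 * u ^ 8 + 2/7 * u ^ 6 + 2/9 * u ^ 4 + 2/11 * u ^ 2 + 2/13)
    - u ^ 13 * x ^ 11 * v ^ 10 * q0 * q1 + u ^ 13 * x ^ 11 * v ^ 11 * (p1 * q0 - p0 * q1)
    - C10 * u ^ 13 * (v ^ 11 - x ^ 11) * q0 * q1"
  have "725226896394/5 * N = poly (Poly
     [7504025393883920477073822415597857179679, 143730232060048790958134111778749083168119,
      1335628960143680894200319848870033754522535, 8021076984560355250584642136035618425106897,
      34986081659146923336646193999085780426539736, 118091917803257123991337057379263880035386654,
      320932082626978698021366596046438638200456038, 721340082651897879517254239622676729902011418,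
      1366897523562645885954799886009334313731390219, 2214943573056100395731854694809293909883921587,
      3102219849902767949112777966848510966080218453, 3786292995618629449023420031106729002050564486,
      4052210024782801804461312042195024972839402616, 3820650017027259389529504316845574584224876728,
      3184370495518168999623511448350224833071522944, 2351487883376157469823732265341676673654835152,
      1540471126484311032997720974685604936248896228, 895589683377806020077546150095882542669460172,
      461812126288397269250809524386807766021778164, 210898141665728517640473076557543347124298152,
      85084257671229403335287818183947127384444992, 30215611586850741721535259314056198031524560,
      9399359662872755429622832254021008939765136, 2544814342312798428688907943933592183502720,
      594657028193725523078752538346488029859040, 118627748566233738315639550768136116192224,
      19914078757843128046957512695757009366624, 2759029918626099761487127262712317544960,
      307048062921445621970000371631200825152, 26375062593888267890265201172131542016,
      1640776086085190004922364367696158976, 65755165827693259886688652868812800,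
      1273948962575408205209520650846208]) (x - 1)"
    unfolding N_def u_def v_def p0_def q0_def p1_def q1_def R10_num_def R10_den_def C10_def
    by simp algebra
  then have "0 < N"
    using assms by (rule pos_if_shifted_coeffs_pos) simp_all
  have "ln_partial_sum 7 x - 1 / (x + 1) + R10_num (x + 1) / R10_den (x + 1) - R10_num x / R10_den x
      - (C10 / x ^ 11 - C10 / (x + 1) ^ 11)
      = N / (u ^ 13 * x ^ 11 * v ^ 11 * q0 * q1)"
    unfolding ln_partial_sum_7[OF pos(1)] u_def[symmetric] v_def[symmetric]
    unfolding p0_def[symmetric] q0_def[symmetric] p1_def[symmetric] q1_def[symmetric] N_def
    using pos by (simp add: field_simps) algebra
  moreover have "0 < N / (u ^ 13 * x ^ 11 * v ^ 11 * q0 * q1)"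
    using \<open>0 < N\<close> pos by (intro divide_pos_pos) (simp_all add: zero_less_mult_iff)
  ultimately show ?thesis
    by linarith
qed

lemma decrement_10_upper:
  fixes x :: real
  assumes "1 \<le> x"
  shows "ln_partial_sum 7 x + 1 / (30 * x * (x + 1) * (2 * x + 1) ^ 13) - 1 / (x + 1)
      + R10_num (x + 1) / R10_den (x + 1) - R10_num x / R10_den x
    < C10 / (x + 1) ^ 11 - C10 / (x + 2) ^ 11"
proof -
  define u v w where "u = 2 * x + 1" and "v = x + 1" and "w = x + 2"
  define p0 q0 p1 q1 where "p0 = R10_num x" and "q0 = R10_den x" and "p1 = R10_num v" and "q1 = R10_den v"
  have pos: "0 < x" "0 < u" "0 < v" "0 < w" "0 < q0" "0 < q1"
    using assms by (simp_all add: u_def v_def w_def q0_def q1_def R10_den_pos)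
  define N where "N = C10 * u ^ 13 * x * (w ^ 11 - v ^ 11) * q0 * q1 - x * v ^ 11 * w ^ 11 * q0 * q1
    * (2 * u ^ 12 + 2/3 * u ^ 10 + 2/5 * u ^ 8 + 2/7 * u ^ 6 + 2/9 * u ^ 4 + 2/11 * u ^ 2 + 2/13)
    - v ^ 10 * w ^ 11 * q0 * q1 / 30 + u ^ 13 * x * v ^ 10 * w ^ 11 * q0 * q1
    - u ^ 13 * x * v ^ 11 * w ^ 11 * (p1 * q0 - p0 * q1)"
  have "725226896394/5 * N = poly (Poly
     [5813322087018138122047966147691768636871525, 105456789947440125087052077492682625087784408,
      923511323257385011986247754829447952437226380, 5201834958310231972177918184693308570981637958,
      21184518675181427565562279208898788582082151089,
      66475779862336015800224637173336360360626444122,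
      167256513693487771919079246919929597424323356880,
      346680845815396671100900985740101822108866422572,
      603571414345080994667620829228238310582273492611,
      895441224792877687977904278209290117661655568416,
      1144489459272480109904357210300270815683834979686,
      1270916095553908405599805058133920446989714452889,
      1234201837126670088326174365489391092081310556426,
      1053410494982053825752627234610378438575624760928,
      793215563901299572901375569655756894542192335928,
      528383313491549485413191885257990915186267699024,
      311923859207022496451562407342020856947576948220,
      163340841501531966434578646984775460141020449064,
      75881523594398069830933713048024231523819570152,
      31251035642515685919094956323711430788719441572,
      11392021699882437232983841840517684271646034952,
      3666597394605372771871389578695759833453167424, 1038280153643845237623953109596898214133733952,
      257444282881715557006008599227065856901346032, 55545161450326098973388726169398968431252064,
      10343213258124411694321549161109982542077312, 1644661932842637269699146343366527472961600,
      220181992143439393384617232819654729618272, 24349180262383355035171443339866308525056,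
      2165608124083155855756915767217055787136, 148914096381803456753293364849840111616,
      7431723180107084856213133976521064448, 239567366233598275604916509375102976,
      3745643417276027325300915752927232]) (x - 1)"
    unfolding N_def u_def v_def w_def p0_def q0_def p1_def q1_def R10_num_def R10_den_def C10_def
    by simp algebra
  then have "0 < N"
    using assms by (rule pos_if_shifted_coeffs_pos) simp_all
  have "C10 / (x + 1) ^ 11 - C10 / (x + 2) ^ 11 - (ln_partial_sum 7 x + 1 / (30 * x * (x + 1) * (2 * x + 1) ^ 13)
      - 1 / (x + 1) + R10_num (x + 1) / R10_den (x + 1) - R10_num x / R10_den x)
      = N / (u ^ 13 * x * v ^ 11 * w ^ 11 * q0 * q1)"
    unfolding ln_partial_sum_7[OF pos(1)] u_def[symmetric] v_def[symmetric] w_def[symmetric]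
    unfolding p0_def[symmetric] q0_def[symmetric] p1_def[symmetric] q1_def[symmetric] N_def
    using pos by (simp add: field_simps) algebra
  moreover have "0 < N / (u ^ 13 * x * v ^ 11 * w ^ 11 * q0 * q1)"
    using \<open>0 < N\<close> pos by (intro divide_pos_pos) (simp_all add: zero_less_mult_iff)
  ultimately show ?thesis
    by linarith
qed

lemma decrement_11_lower:
  fixes x :: real
  assumes "1 \<le> x"
  shows "C11 / (x + 1) ^ 12 - C11 / (x + 2) ^ 12
    < ln_partial_sum 7 x - 1 / (x + 1) + R11_num (x + 1) / R11_den (x + 1) - R11_num x / R11_den x"
proof -
  define u v w where "u = 2 * x + 1" and "v = x + 1" and "w = x + 2"
  define p0 q0 p1 q1 where "p0 = R11_num x" and "q0 = R11_den x" and "p1 = R11_num v" and "q1 = R11_den v"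
  have pos: "0 < x" "0 < u" "0 < v" "0 < w" "0 < q0" "0 < q1"
    using assms by (simp_all add: u_def v_def w_def q0_def q1_def R11_den_pos)
  define N where "N = v ^ 12 * w ^ 12 * q0 * q1
    * (2 * u ^ 12 + 2/3 * u ^ 10 + 2/5 * u ^ 8 + 2/7 * u ^ 6 + 2/9 * u ^ 4 + 2/11 * u ^ 2 + 2/13)
    - u ^ 13 * v ^ 11 * w ^ 12 * q0 * q1 + u ^ 13 * v ^ 12 * w ^ 12 * (p1 * q0 - p0 * q1)
    - C11 * u ^ 13 * (w ^ 12 - v ^ 12) * q0 * q1"
  have "758186/315 * N = poly (Poly
     [15810651190136057586654493600884, 283919318640941905980232968637764,
      2473109902863007958272156136001225, 13920857411343007405648279714402536,
      56914805607023318137838013254384403, 180109210378907595293265846214172826,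
      459077688634574903690239455684917565, 968368541008194171148587081452807724,
      1723661509828878912589960751168375043, 2626765511864267586507323048529016302,
      3465495048579616812093362947098091467, 3992320333236994570930594616292991392,
      4043261499541954292833235542590458529, 3618929081096409240302359311236397602,
      2874429390839654670876359122178374338, 2032347844469393530861735856494370040,
      1282031461737126989135127656556085692, 722603141023628410919618769707098920,
      364198963814063298282080432917359852, 164155307161650261374207330461620288,
      66128833500914612358265271073699828, 23778276436591634064102308183658888,
      7615969268651469747035477238152008, 2166488278662185736982613523959904,
      545226078497822228027372370849384, 120774982118870266045755260185744,
      23394621509785375763370814845696, 3929558767547948577143163601344,
      566158508328523794275541833104, 68975529412417121249192382816, 6970481266830294714724206048,
      568827041818114506887319808, 36030131294017789822077600, 1662701054016208995057984,
      49747828047759042362304, 724582875579388919808]) (x - 1)"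
    unfolding N_def u_def v_def w_def p0_def q0_def p1_def q1_def R11_num_def R11_den_def C11_def
    by simp algebra
  then have "0 < N"
    using assms by (rule pos_if_shifted_coeffs_pos) simp_all
  have "ln_partial_sum 7 x - 1 / (x + 1) + R11_num (x + 1) / R11_den (x + 1) - R11_num x / R11_den x
      - (C11 / (x + 1) ^ 12 - C11 / (x + 2) ^ 12)
      = N / (u ^ 13 * v ^ 12 * w ^ 12 * q0 * q1)"
    unfolding ln_partial_sum_7[OF pos(1)] u_def[symmetric] v_def[symmetric] w_def[symmetric]
    unfolding p0_def[symmetric] q0_def[symmetric] p1_def[symmetric] q1_def[symmetric] N_def
    using pos by (simp add: field_simps) algebra
  moreover have "0 < N / (u ^ 13 * v ^ 12 * w ^ 12 * q0 * q1)"
    using \<open>0 < N\<close> pos by (intro divide_pos_pos) (simp_all add: zero_less_mult_iff)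
  ultimately show ?thesis
    by linarith
qed

lemma decrement_11_upper:
  fixes x :: real
  assumes "1 \<le> x"
  shows "ln_partial_sum 7 x + 1 / (30 * x * (x + 1) * (2 * x + 1) ^ 13) - 1 / (x + 1)
      + R11_num (x + 1) / R11_den (x + 1) - R11_num x / R11_den x
    < C11 / x ^ 12 - C11 / (x + 1) ^ 12"
proof -
  define u v where "u = 2 * x + 1" and "v = x + 1"
  define p0 q0 p1 q1 where "p0 = R11_num x" and "q0 = R11_den x" and "p1 = R11_num v" and "q1 = R11_den v"
  have pos: "0 < x" "0 < u" "0 < v" "0 < q0" "0 < q1"
    using assms by (simp_all add: u_def v_def q0_def q1_def R11_den_pos)
  define N where "N = C11 * u ^ 13 * (v ^ 12 - x ^ 12) * q0 * q1 - x ^ 12 * v ^ 12 * q0 * q1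
    * (2 * u ^ 12 + 2/3 * u ^ 10 + 2/5 * u ^ 8 + 2/7 * u ^ 6 + 2/9 * u ^ 4 + 2/11 * u ^ 2 + 2/13)
    - x ^ 11 * v ^ 11 * q0 * q1 / 30 + u ^ 13 * x ^ 12 * v ^ 11 * q0 * q1
    - u ^ 13 * x ^ 12 * v ^ 12 * (p1 * q0 - p0 * q1)"
  have "758186/315 * N = poly (Poly
     [1587966553989829228554336180, 33851326205707020274738311972, 350806833981739133822120912697,
      2354460918430181391199802915664, 11502835610418189224351901399955,
      43592600173501303072209112930218, 133347796876745595923661289468701,
      338269951968231774721528366642404, 725544592663097585087530466167155,
      1334890298538371714001656921469198, 2129955405421899243785995872350139,
      2972452778722982398288528630704024, 3652003310026877772876876515998449,
      3970293905720080240811849471466690, 3834102368942074012526578440354354,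
      3298232916877908859593394946615232, 2532276082530084278200689340862908,
      1737133196048198618899638519539064, 1065106206008399834221079348112540,
      583455759271385656362918686245152, 285208034730070239325116156559524,
      124160794469870408749248981671160, 47997366796364419229654563350168,
      16411870431802045349572384960992, 4938316395855576506735234970072,
      1298997935600653557743725251936, 296180713526091684102124709904, 57896592253754092539120551040,
      9563951435084015659810060720, 1309469564027606874730662240, 144643328547013772816502240,
      12387754896641706791139840, 771963952792875699249120, 31144589441182230773760,
      610678224336906485760]) (x - 1)"
    unfolding N_def u_def v_def p0_def q0_def p1_def q1_def R11_num_def R11_den_def C11_def
    by simp algebra
  then have "0 < N"
    using assms by (rule pos_if_shifted_coeffs_pos) simp_all
  have "C11 / x ^ 12 - C11 / (x + 1) ^ 12 - (ln_partial_sum 7 x + 1 / (30 * x * (x + 1) * (2 * x + 1) ^ 13)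
      - 1 / (x + 1) + R11_num (x + 1) / R11_den (x + 1) - R11_num x / R11_den x)
      = N / (u ^ 13 * x ^ 12 * v ^ 12 * q0 * q1)"
    unfolding ln_partial_sum_7[OF pos(1)] u_def[symmetric] v_def[symmetric]
    unfolding p0_def[symmetric] q0_def[symmetric] p1_def[symmetric] q1_def[symmetric] N_def
    using pos by (simp add: field_simps) algebra
  moreover have "0 < N / (u ^ 13 * x ^ 12 * v ^ 12 * q0 * q1)"
    using \<open>0 < N\<close> pos by (intro divide_pos_pos) (simp_all add: zero_less_mult_iff)
  ultimately show ?thesis
    by linarith
qed

lemma r_10_decrement:
  assumes "1 \<le> n"
  shows "r 10 n - r 10 (Suc n) = ln (1 + 1 / real n) - 1 / (real n + 1)
    + R10_num (real n + 1) / R10_den (real n + 1) - R10_num n / R10_den n"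
proof -
  have "R 10 (Suc n) = R10_num (real n + 1) / R10_den (real n + 1)"
    using R_10_eq[of "Suc n"] by (simp add: add.commute)
  then show ?thesis
    using r_decrement[of n 10] R_10_eq[OF assms] assms by simp
qed

lemma r_11_decrement:
  assumes "1 \<le> n"
  shows "r 11 n - r 11 (Suc n) = ln (1 + 1 / real n) - 1 / (real n + 1)
    + R11_num (real n + 1) / R11_den (real n + 1) - R11_num n / R11_den n"
proof -
  have "R 11 (Suc n) = R11_num (real n + 1) / R11_den (real n + 1)"
    using R_11_eq[of "Suc n"] by (simp add: add.commute)
  then show ?thesis
    using r_decrement[of n 11] R_11_eq[OF assms] assms by simp
qed

lemma r_10_lower_bound:
  assumes "1 \<le> n"
  shows "euler_mascheroni + C10 / real n ^ 11 < r 10 n"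
proof (rule less_if_decrements_less[where f = "\<lambda>m. euler_mascheroni + C10 / real m ^ 11" and e = "r 10"])
  show "r 10 \<longlonglongrightarrow> euler_mascheroni"
    by (rule r_tendsto_euler_mascheroni)
  show "(\<lambda>m. euler_mascheroni + C10 / real m ^ 11) \<longlonglongrightarrow> euler_mascheroni"
    by real_asymp
  fix m
  assume "n \<le> m"
  then have m: "1 \<le> real m"
    using assms by simp
  have "C10 / real m ^ 11 - C10 / (real m + 1) ^ 11 < ln_partial_sum 7 m - 1 / (real m + 1)
      + R10_num (real m + 1) / R10_den (real m + 1) - R10_num m / R10_den m"
    by (rule decrement_10_lower[OF m])
  also have "\<dots> \<le> r 10 m - r 10 (Suc m)"
    using r_10_decrement[of m] ln_partial_sum_le[of "real m" 7] m by simp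
  finally show "euler_mascheroni + C10 / real m ^ 11 - (euler_mascheroni + C10 / real (Suc m) ^ 11)
      < r 10 m - r 10 (Suc m)"
    by (simp add: algebra_simps)
qed

lemma r_10_upper_bound:
  assumes "1 \<le> n"
  shows "r 10 n < euler_mascheroni + C10 / (real n + 1) ^ 11"
proof (rule less_if_decrements_less[where e = "\<lambda>m. euler_mascheroni + C10 / (real m + 1) ^ 11" and f = "r 10"])
  show "r 10 \<longlonglongrightarrow> euler_mascheroni"
    by (rule r_tendsto_euler_mascheroni)
  show "(\<lambda>m. euler_mascheroni + C10 / (real m + 1) ^ 11) \<longlonglongrightarrow> euler_mascheroni"
    by real_asymp
  fix m
  assume "n \<le> m"
  then have m: "1 \<le> real m"
    using assms by simp
  have "r 10 m - r 10 (Suc m) \<le> ln_partial_sum 7 m + 1 / (30 * real m * (real m + 1) * (2 * real m + 1) ^ 13)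
      - 1 / (real m + 1) + R10_num (real m + 1) / R10_den (real m + 1) - R10_num m / R10_den m"
    using r_10_decrement[of m] ln_le_ln_partial_sum_7[of "real m"] m by simp
  also have "\<dots> < C10 / (real m + 1) ^ 11 - C10 / (real m + 2) ^ 11"
    by (rule decrement_10_upper[OF m])
  finally show "r 10 m - r 10 (Suc m)
      < euler_mascheroni + C10 / (real m + 1) ^ 11 - (euler_mascheroni + C10 / (real (Suc m) + 1) ^ 11)"
    by (simp add: algebra_simps)
qed

lemma r_11_lower_bound:
  assumes "1 \<le> n"
  shows "euler_mascheroni + C11 / (real n + 1) ^ 12 < r 11 n"
proof (rule less_if_decrements_less[where f = "\<lambda>m. euler_mascheroni + C11 / (real m + 1) ^ 12" and e = "r 11"])
  show "r 11 \<longlonglongrightarrow> euler_mascheroni"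
    by (rule r_tendsto_euler_mascheroni)
  show "(\<lambda>m. euler_mascheroni + C11 / (real m + 1) ^ 12) \<longlonglongrightarrow> euler_mascheroni"
    by real_asymp
  fix m
  assume "n \<le> m"
  then have m: "1 \<le> real m"
    using assms by simp
  have "C11 / (real m + 1) ^ 12 - C11 / (real m + 2) ^ 12 < ln_partial_sum 7 m - 1 / (real m + 1)
      + R11_num (real m + 1) / R11_den (real m + 1) - R11_num m / R11_den m"
    by (rule decrement_11_lower[OF m])
  also have "\<dots> \<le> r 11 m - r 11 (Suc m)"
    using r_11_decrement[of m] ln_partial_sum_le[of "real m" 7] m by simp
  finally show "euler_mascheroni + C11 / (real m + 1) ^ 12 - (euler_mascheroni + C11 / (real (Suc m) + 1) ^ 12)
      < r 11 m - r 11 (Suc m)"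
    by (simp add: algebra_simps)
qed

lemma r_11_upper_bound:
  assumes "1 \<le> n"
  shows "r 11 n < euler_mascheroni + C11 / real n ^ 12"
proof (rule less_if_decrements_less[where e = "\<lambda>m. euler_mascheroni + C11 / real m ^ 12" and f = "r 11"])
  show "r 11 \<longlonglongrightarrow> euler_mascheroni"
    by (rule r_tendsto_euler_mascheroni)
  show "(\<lambda>m. euler_mascheroni + C11 / real m ^ 12) \<longlonglongrightarrow> euler_mascheroni"
    by real_asymp
  fix m
  assume "n \<le> m"
  then have m: "1 \<le> real m"
    using assms by simp
  have "r 11 m - r 11 (Suc m) \<le> ln_partial_sum 7 m + 1 / (30 * real m * (real m + 1) * (2 * real m + 1) ^ 13)
      - 1 / (real m + 1) + R11_num (real m + 1) / R11_den (real m + 1) - R11_num m / R11_den m"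
    using r_11_decrement[of m] ln_le_ln_partial_sum_7[of "real m"] m by simp
  also have "\<dots> < C11 / real m ^ 12 - C11 / (real m + 1) ^ 12"
    by (rule decrement_11_upper[OF m])
  finally show "r 11 m - r 11 (Suc m)
      < euler_mascheroni + C11 / real m ^ 12 - (euler_mascheroni + C11 / real (Suc m) ^ 12)"
    by (simp add: algebra_simps)
qed

theorem theorem2:
  fixes n :: nat
  assumes "n \<ge> 1"
  shows "- C10 * (1 / (real n + 1) ^ 11) < euler_mascheroni - r 10 n
       \<and> euler_mascheroni - r 10 n < - C10 * (1 / (real n) ^ 11)
       \<and> C11 * (1 / (real n + 1) ^ 12) < r 11 n - euler_mascheroni
       \<and> r 11 n - euler_mascheroni < C11 * (1 / (real n) ^ 12)"
  using r_10_lower_bound[OF assms] r_10_upper_bound[OF assms]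
    r_11_lower_bound[OF assms] r_11_upper_bound[OF assms]
  by (simp add: field_simps)

end
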